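(* In the setting below (Algorithm 1), when all agents are truthful, with $n_i=|X_i|\ge1$ and $|Z_i|=\sum_{j\ne i}n_j-1\ge1$, $$0\le\mathbb E[L_i(\mathrm{id},\dots,\mathrm{id})]\le\frac14\Big(\frac1{|X_i|}+\frac1{|Z_i|}\Big).$$ Moreover, if $\Pi$ is concentrated on continuous (atomless) distributions on $\mathbb R$, then $$\frac1{6|Z_i|}\le\mathbb E[L_i(\mathrm{id},\dots,\mathrm{id})]\le\frac16\Big(\frac1{|X_i|}+\frac1{|Z_i|}\Big).$$
   Context: Setting (Algorithm 1). Fix $m\ge 2$ agents. A prior $\Pi$ is a probability distribution on the set of Borel probability distributions on $\mathbb{R}$. A random distribution $D\sim\Pi$ is drawn; conditionally on $D$, agent $i$ holds $X_i=(X_{i,1},\dots,X_{i,n_i})$ with entries i.i.d. from $D$, independent across agents. Under truthful reporting ($\mathrm{id}$) each agent submits its own dataset. For a finite nonempty multiset $S\subset\mathbb R$, $F_S(t)=\frac1{|S|}\sum_{s\in S}\mathbf 1\{s\le t\}$. Mechanism: $X_{-i}=\bigcup_{j\ne i}X_j$, $T_i$ chosen uniformly at random from $X_{-i}$, $Z_i=X_{-i}\setminus\{T_i\}$, and $L_i=\big(\mathbb E[F_{Z_i}(T_i)\mid X_{i,1},\dots,X_{i,n_i},T_i]-F_{Z_i}(T_i)\big)^2$, the conditional expectation taken under the model $D\sim\Pi$. Expectations are over $D\sim\Pi$, data and mechanism randomness. *)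

theory Defs
  imports "HOL-Probability.Probability" "HOL-Library.Multiset"
begin

text \<open>Data of agent j is indexed by pairs (j,k), k < n j. All data points of all m agents.\<close>
definition data_idx :: "nat \<Rightarrow> (nat \<Rightarrow> nat) \<Rightarrow> (nat \<times> nat) set" where
  "data_idx m n = {(j,k). j < m \<and> k < n j}"

definition own_idx :: "(nat \<Rightarrow> nat) \<Rightarrow> nat \<Rightarrow> (nat \<times> nat) set" where
  "own_idx n i = {(j,k). j = i \<and> k < n i}"

definition others_idx :: "nat \<Rightarrow> (nat \<Rightarrow> nat) \<Rightarrow> nat \<Rightarrow> (nat \<times> nat) set" where
  "others_idx m n i = {(j,k). j < m \<and> j \<noteq> i \<and> k < n j}"

definition ecdf :: "real multiset \<Rightarrow> real \<Rightarrow> real" where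
  "ecdf S t = real (size (filter_mset (\<lambda>s. s \<le> t) S)) / real (size S)"

text \<open>Full model: D ~ prior, all data i.i.d. from D given D, and the mechanism picks
  the index of T_i uniformly among the indices of X_{-i}.  A sample point is
  (x, t): x the data array, t the index of T_i.\<close>
definition model :: "real measure measure \<Rightarrow> nat \<Rightarrow> (nat \<Rightarrow> nat) \<Rightarrow> nat
    \<Rightarrow> ((nat \<times> nat \<Rightarrow> real) \<times> (nat \<times> nat)) measure" where
  "model prior m n i =
     (prior \<bind> (\<lambda>D. PiM (data_idx m n) (\<lambda>_. D)))
       \<Otimes>\<^sub>M measure_pmf (pmf_of_set (others_idx m n i))"

definition T_val :: "(nat \<times> nat \<Rightarrow> real) \<times> (nat \<times> nat) \<Rightarrow> real" where
  "T_val \<omega> = fst \<omega> (snd \<omega>)"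

definition Z_set :: "nat \<Rightarrow> (nat \<Rightarrow> nat) \<Rightarrow> nat \<Rightarrow> (nat \<times> nat \<Rightarrow> real) \<times> (nat \<times> nat) \<Rightarrow> real multiset" where
  "Z_set m n i \<omega> = image_mset (fst \<omega>) (mset_set (others_idx m n i - {snd \<omega>}))"

definition stat :: "nat \<Rightarrow> (nat \<Rightarrow> nat) \<Rightarrow> nat \<Rightarrow> (nat \<times> nat \<Rightarrow> real) \<times> (nat \<times> nat) \<Rightarrow> real" where
  "stat m n i \<omega> = ecdf (Z_set m n i \<omega>) (T_val \<omega>)"

definition info_alg :: "real measure measure \<Rightarrow> nat \<Rightarrow> (nat \<Rightarrow> nat) \<Rightarrow> nat
    \<Rightarrow> ((nat \<times> nat \<Rightarrow> real) \<times> (nat \<times> nat)) measure" where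
  "info_alg prior m n i =
     vimage_algebra (space (model prior m n i))
       (\<lambda>\<omega>. (restrict (fst \<omega>) (own_idx n i), T_val \<omega>))
       (PiM (own_idx n i) (\<lambda>_. borel) \<Otimes>\<^sub>M borel)"

text \<open>Loss L_i under truthful reporting.\<close>
definition loss :: "real measure measure \<Rightarrow> nat \<Rightarrow> (nat \<Rightarrow> nat) \<Rightarrow> nat
    \<Rightarrow> (nat \<times> nat \<Rightarrow> real) \<times> (nat \<times> nat) \<Rightarrow> real" where
  "loss prior m n i \<omega> =
     (real_cond_exp (model prior m n i) (info_alg prior m n i) (stat m n i) \<omega> - stat m n i \<omega>)\<^sup>2"

definition expected_loss :: "real measure measure \<Rightarrow> nat \<Rightarrow> (nat \<Rightarrow> nat) \<Rightarrow> nat \<Rightarrow> real" where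
  "expected_loss prior m n i = integral\<^sup>L (model prior m n i) (loss prior m n i)"

end

theory Submission
  imports Defs
begin

text \<open>Fix the law \<open>D\<close> of the data and the index of \<open>T\<^sub>i\<close>, and let \<open>F\<close> be the cdf of \<open>D\<close>.
  For a data point \<open>X\<^sub>r\<close> other than \<open>T\<^sub>i\<close>, the centred indicator \<open>1{X\<^sub>r \<le> T\<^sub>i} - F(T\<^sub>i)\<close> is
  orthogonal to every bounded function not depending on \<open>X\<^sub>r\<close>, and its second moment is
  \<open>v(D) = E[F(X) (1 - F(X))]\<close>. Hence for every \<open>h\<close> not depending on the points of \<open>Z\<^sub>i\<close>,
  \<open>E[(h - F\<^sub>Z(T\<^sub>i))\<^sup>2] = E[(h - F(T\<^sub>i))\<^sup>2] + v(D) / |Z\<^sub>i|\<close>.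
  A function of the agent's information \<open>(X\<^sub>i, T\<^sub>i)\<close> does not depend on \<open>Z\<^sub>i\<close>; this gives the
  lower bound \<open>v(D) / |Z\<^sub>i|\<close>. Applying the identity twice to the agent's own empirical cdf at \<open>T\<^sub>i\<close>
  gives exactly \<open>v(D) (1/|X\<^sub>i| + 1/|Z\<^sub>i|)\<close>, an upper bound because the conditional expectation
  is the \<open>L\<^sup>2\<close>-optimal predictor. Finally \<open>v(D) \<le> 1/4\<close> since \<open>F (1 - F) \<le> 1/4\<close>, and for atomless
  \<open>D\<close> ties between independent draws are null, so \<open>P(X\<^sub>1 \<le> X\<^sub>2) = 1/2\<close>,
  \<open>P(X\<^sub>1 \<le> X\<^sub>3 \<and> X\<^sub>2 \<le> X\<^sub>3) = 1/3\<close> and \<open>v(D) = 1/2 - 1/3 = 1/6\<close>.\<close>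

lemma (in finite_measure_subalgebra) real_cond_exp_bounded_version:
  fixes S :: "'a \<Rightarrow> real"
  assumes S[measurable]: "S \<in> borel_measurable M"
    and S_bound: "\<And>x. x \<in> space M \<Longrightarrow> a \<le> S x \<and> S x \<le> b" and "a \<le> b"
  obtains c where "c \<in> borel_measurable F" "\<And>x. a \<le> c x \<and> c x \<le> b"
    "AE x in M. real_cond_exp M F S x = c x"
proof
  let ?c = "\<lambda>x. max a (min b (real_cond_exp M F S x))"
  have S_int: "integrable M S"
    using S_bound by (intro integrable_const_bound[where B="\<bar>a\<bar> + \<bar>b\<bar>"]) force+
  have "AE x in M. a \<le> real_cond_exp M F S x"
    using S_bound by (intro real_cond_exp_ge_c[OF S_int] AE_I2) auto
  moreover have "AE x in M. real_cond_exp M F S x \<le> b"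
    using S_bound by (intro real_cond_exp_le_c[OF S_int] AE_I2) auto
  ultimately show "AE x in M. real_cond_exp M F S x = ?c x"
    by eventually_elim auto
  show "?c \<in> borel_measurable F"
    by measurable
  show "a \<le> ?c x \<and> ?c x \<le> b" for x
    using \<open>a \<le> b\<close> by auto
qed

lemma sq_diff_le:
  fixes a b :: real
  assumes "\<bar>a\<bar> \<le> A" "\<bar>b\<bar> \<le> B"
  shows "(a - b)\<^sup>2 \<le> (A + B)\<^sup>2"
proof -
  have "\<bar>a - b\<bar> \<le> A + B"
    using assms by linarith
  then show ?thesis
    using abs_le_square_iff[of "a - b" "A + B"] assms by simp
qed

lemma sq_diff_le_1: "0 \<le> a \<and> a \<le> 1 \<Longrightarrow> 0 \<le> b \<and> b \<le> 1 \<Longrightarrow> \<bar>(a - b)\<^sup>2\<bar> \<le> (1 :: real)"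
  by (simp add: abs_square_le_1 abs_le_iff)

lemma (in finite_measure_subalgebra) AE_abs_real_cond_exp_le:
  fixes S :: "'a \<Rightarrow> real"
  assumes S[measurable]: "S \<in> borel_measurable M" and S_bound: "\<And>x. x \<in> space M \<Longrightarrow> \<bar>S x\<bar> \<le> B"
  shows "AE x in M. \<bar>real_cond_exp M F S x\<bar> \<le> B"
proof -
  have S_int: "integrable M S"
    using S_bound by (intro integrable_const_bound[where B=B]) auto
  have "AE x in M. -B \<le> real_cond_exp M F S x"
    using S_bound by (intro real_cond_exp_ge_c[OF S_int] AE_I2) (fastforce simp: abs_le_iff)
  moreover have "AE x in M. real_cond_exp M F S x \<le> B"
    using S_bound by (intro real_cond_exp_le_c[OF S_int] AE_I2) (auto simp: abs_le_iff)
  ultimately show ?thesis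
    by eventually_elim auto
qed

lemma (in finite_measure_subalgebra) integral_sq_real_cond_exp_le:
  fixes S g :: "'a \<Rightarrow> real"
  assumes S[measurable]: "S \<in> borel_measurable M" and S_bound: "\<And>x. x \<in> space M \<Longrightarrow> \<bar>S x\<bar> \<le> B"
    and g[measurable]: "g \<in> borel_measurable F" and g_bound: "\<And>x. x \<in> space M \<Longrightarrow> \<bar>g x\<bar> \<le> C"
  shows "(\<integral>x. (real_cond_exp M F S x - S x)\<^sup>2 \<partial>M) \<le> (\<integral>x. (g x - S x)\<^sup>2 \<partial>M)"
proof -
  let ?c = "real_cond_exp M F S"
  define d where "d x = g x - ?c x" for x
  have [measurable]: "g \<in> borel_measurable M" by (rule measurable_from_subalg[OF subalg g])
  have d[measurable]: "d \<in> borel_measurable F" unfolding d_def by measurable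
  have [measurable]: "d \<in> borel_measurable M" by (rule measurable_from_subalg[OF subalg d])
  have bounds: "AE x in M. \<bar>S x\<bar> \<le> B \<and> \<bar>g x\<bar> \<le> C \<and> \<bar>?c x\<bar> \<le> B"
    using AE_abs_real_cond_exp_le[OF S S_bound] S_bound g_bound by (auto intro: AE_I2 elim: AE_mp)
  have dS_int: "integrable M (\<lambda>x. d x * S x)"
  proof (rule integrable_const_bound[where B="(C + B) * B"])
    show "AE x in M. norm (d x * S x) \<le> (C + B) * B"
      using bounds by eventually_elim
        (auto simp: d_def abs_mult intro!: mult_mono abs_triangle_ineq4[THEN order_trans])
  qed measurable
  have cross: "(\<integral>x. d x * (?c x - S x) \<partial>M) = 0"
    using real_cond_exp_intg[OF dS_int d S] dS_int by (simp add: right_diff_distrib)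
  have sq_int: "integrable M (\<lambda>x. (?c x - S x)\<^sup>2)"
  proof (rule integrable_const_bound[where B="(B + B)\<^sup>2"])
    show "AE x in M. norm ((?c x - S x)\<^sup>2) \<le> (B + B)\<^sup>2"
      using bounds by eventually_elim (simp only: real_norm_def abs_power2, blast intro: sq_diff_le)
  qed measurable
  have "(\<integral>x. (?c x - S x)\<^sup>2 \<partial>M) = (\<integral>x. (?c x - S x)\<^sup>2 + 2 * (d x * (?c x - S x)) \<partial>M)"
    using sq_int real_cond_exp_intg(1)[OF dS_int d S] dS_int cross
    by (simp add: right_diff_distrib)
  also have "\<dots> \<le> (\<integral>x. (g x - S x)\<^sup>2 \<partial>M)"
  proof (rule integral_mono)
    fix x
    have "(g x - S x)\<^sup>2 = (?c x - S x)\<^sup>2 + 2 * (d x * (?c x - S x)) + (d x)\<^sup>2"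
      by (simp add: d_def power2_eq_square algebra_simps)
    then show "(?c x - S x)\<^sup>2 + 2 * (d x * (?c x - S x)) \<le> (g x - S x)\<^sup>2"
      by simp
  next
    show "integrable M (\<lambda>x. (g x - S x)\<^sup>2)"
    proof (rule integrable_const_bound[where B="(C + B)\<^sup>2"])
      show "AE x in M. norm ((g x - S x)\<^sup>2) \<le> (C + B)\<^sup>2"
        using bounds by eventually_elim (auto intro: sq_diff_le)
    qed measurable
  qed (use sq_int real_cond_exp_intg(1)[OF dS_int d S] dS_int in \<open>auto simp: right_diff_distrib\<close>)
  finally show ?thesis .
qed

lemma (in product_prob_space) integral_PiM_resample:
  fixes f g :: "_ \<Rightarrow> real"
  assumes "finite I" "r \<in> I"
    and f: "integrable (PiM I M) f" and g: "integrable (PiM I M) g"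
    and resample: "\<And>x. x \<in> space (PiM I M) \<Longrightarrow> (\<integral>y. f (x(r := y)) \<partial>M r) = g x"
  shows "integral\<^sup>L (PiM I M) f = integral\<^sup>L (PiM I M) g"
proof -
  let ?J = "I - {r}"
  have I_eq: "insert r ?J = I"
    using \<open>r \<in> I\<close> by auto
  have split: "integral\<^sup>L (PiM I M) h = (\<integral>x. (\<integral>y. h (x(r := y)) \<partial>M r) \<partial>PiM ?J M)"
    if "integrable (PiM I M) h" for h :: "_ \<Rightarrow> real"
    using product_integral_insert[of ?J r h] that I_eq \<open>finite I\<close> by simp
  have "integral\<^sup>L (PiM I M) g = (\<integral>x. (\<integral>y. g (x(r := y)) \<partial>M r) \<partial>PiM ?J M)"
    by (rule split[OF g])
  also have "\<dots> = (\<integral>x. (\<integral>y. (\<integral>y'. f (x(r := y')) \<partial>M r) \<partial>M r) \<partial>PiM ?J M)"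
  proof (intro Bochner_Integration.integral_cong refl)
    fix x y assume "x \<in> space (PiM ?J M)" "y \<in> space (M r)"
    then have "x(r := y) \<in> space (PiM I M)"
      using I_eq by (auto simp: space_PiM PiE_def extensional_def)
    then show "g (x(r := y)) = (\<integral>y'. f (x(r := y')) \<partial>M r)"
      using resample by fastforce
  qed
  also have "\<dots> = integral\<^sup>L (PiM I M) f"
    using split[OF f] M.prob_space by simp
  finally show ?thesis ..
qed

lemma (in product_prob_space) integral_PiM_component:
  fixes f :: "_ \<Rightarrow> real"
  assumes "i \<in> I" "f \<in> borel_measurable (M i)"
  shows "(\<integral>x. f (x i) \<partial>PiM I M) = integral\<^sup>L (M i) f"
  using integral_distr[of "\<lambda>x. x i" "PiM I M" "M i" f] assms
  by (simp add: PiM_component measurable_component_singleton)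

lemma sq_diff_sum_divide:
  fixes u c :: real and e :: "'i \<Rightarrow> real"
  shows "(u - (\<Sum>r\<in>Y. e r) / c)\<^sup>2
    = u * u - 2 / c * (\<Sum>r\<in>Y. u * e r) + (\<Sum>r\<in>Y. \<Sum>r'\<in>Y. e r * e r') / c\<^sup>2"
proof -
  have "(u - (\<Sum>r\<in>Y. e r) / c)\<^sup>2
    = u * u - 2 / c * (u * (\<Sum>r\<in>Y. e r)) + ((\<Sum>r\<in>Y. e r) * (\<Sum>r\<in>Y. e r)) / c\<^sup>2"
    by (cases "c = 0") (simp_all add: power2_eq_square field_simps)
  then show ?thesis
    unfolding sum_product sum_distrib_left[of u] .
qed

lemma (in finite_measure) integral_sq_diff_sum_orthogonal:
  fixes u :: "'a \<Rightarrow> real" and e :: "'i \<Rightarrow> 'a \<Rightarrow> real"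
  assumes "finite Y"
    and u: "u \<in> borel_measurable M" "\<And>x. x \<in> space M \<Longrightarrow> \<bar>u x\<bar> \<le> B"
    and e: "\<And>r. r \<in> Y \<Longrightarrow> e r \<in> borel_measurable M"
      "\<And>r x. r \<in> Y \<Longrightarrow> x \<in> space M \<Longrightarrow> \<bar>e r x\<bar> \<le> B"
    and orth_u: "\<And>r. r \<in> Y \<Longrightarrow> (\<integral>x. u x * e r x \<partial>M) = 0"
    and orth_e: "\<And>r r'. r \<in> Y \<Longrightarrow> r' \<in> Y \<Longrightarrow> r \<noteq> r' \<Longrightarrow> (\<integral>x. e r x * e r' x \<partial>M) = 0"
  shows "(\<integral>x. (u x - (\<Sum>r\<in>Y. e r x) / c)\<^sup>2 \<partial>M)
    = (\<integral>x. (u x)\<^sup>2 \<partial>M) + (\<Sum>r\<in>Y. \<integral>x. (e r x)\<^sup>2 \<partial>M) / c\<^sup>2"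
proof -
  have prod_int: "integrable M (\<lambda>x. f x * g x)"
    if "f \<in> borel_measurable M" "g \<in> borel_measurable M"
      "\<And>x. x \<in> space M \<Longrightarrow> \<bar>f x\<bar> \<le> B" "\<And>x. x \<in> space M \<Longrightarrow> \<bar>g x\<bar> \<le> B" for f g
    using that by (intro integrable_const_bound[where B="B * B"] AE_I2)
      (auto simp: abs_mult intro!: mult_mono order_trans[OF abs_ge_zero])
  have int_uu: "integrable M (\<lambda>x. u x * u x)"
    using prod_int[OF u(1) u(1) u(2) u(2)] .
  have int_ue: "integrable M (\<lambda>x. u x * e r x)" if "r \<in> Y" for r
    using prod_int[OF u(1) e(1)[OF that] u(2) e(2)[OF that]] .
  have int_ee: "integrable M (\<lambda>x. e r x * e r' x)" if "r \<in> Y" "r' \<in> Y" for r r'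
    using prod_int[OF e(1)[OF that(1)] e(1)[OF that(2)] e(2)[OF that(1)] e(2)[OF that(2)]] .
  have diag: "(\<Sum>r'\<in>Y. \<integral>x. e r x * e r' x \<partial>M) = (\<integral>x. (e r x)\<^sup>2 \<partial>M)" if "r \<in> Y" for r
  proof -
    have "(\<Sum>r'\<in>Y - {r}. \<integral>x. e r x * e r' x \<partial>M) = 0"
      using orth_e that by (intro sum.neutral) auto
    then show ?thesis
      using \<open>finite Y\<close> that by (simp add: sum.remove power2_eq_square)
  qed
  have "(\<integral>x. (u x - (\<Sum>r\<in>Y. e r x) / c)\<^sup>2 \<partial>M)
      = (\<integral>x. u x * u x \<partial>M) - 2 / c * (\<Sum>r\<in>Y. \<integral>x. u x * e r x \<partial>M)
        + (\<Sum>r\<in>Y. \<Sum>r'\<in>Y. \<integral>x. e r x * e r' x \<partial>M) / c\<^sup>2"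
    unfolding sq_diff_sum_divide using int_uu int_ue int_ee
    by (simp add: Bochner_Integration.integral_sum)
  then show ?thesis
    using orth_u diag by (simp add: power2_eq_square)
qed

lemma measurable_PiM_prob_algebra:
  assumes "finite I"
  shows "(\<lambda>D. PiM I (\<lambda>_. D)) \<in> prob_algebra N \<rightarrow>\<^sub>M prob_algebra (PiM I (\<lambda>_. N))"
proof (rule measurable_prob_algebra_generated[OF sets_PiM Int_stable_prod_algebra prod_algebra_sets_into_space])
  fix D assume "D \<in> space (prob_algebra N)"
  then have D: "prob_space D" "sets D = sets N"
    by (auto simp: space_prob_algebra)
  then show "prob_space (PiM I (\<lambda>_. D))"
    by (simp add: prob_space_PiM)
  show "sets (PiM I (\<lambda>_. D)) = sets (PiM I (\<lambda>_. N))"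
    using D by (intro sets_PiM_cong) auto
next
  fix A assume "A \<in> prod_algebra I (\<lambda>_. N)"
  then obtain E where A: "A = Pi\<^sub>E I E" "E \<in> (\<Pi> i\<in>I. sets N)"
    by (rule prod_algebraE_all)
  have "(\<lambda>D. \<Prod>i\<in>I. emeasure D (E i)) \<in> borel_measurable (prob_algebra N)"
  proof (intro borel_measurable_prod_ennreal)
    fix i assume "i \<in> I"
    then have "E i \<in> sets N"
      using A by auto
    then show "(\<lambda>D. emeasure D (E i)) \<in> borel_measurable (prob_algebra N)"
      unfolding prob_algebra_def by (intro measurable_restrict_space1 measurable_emeasure_subprob_algebra)
  qed
  moreover have "emeasure (PiM I (\<lambda>_. D)) A = (\<Prod>i\<in>I. emeasure D (E i))"
    if "D \<in> space (prob_algebra N)" for D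
  proof -
    interpret product_prob_space "\<lambda>_. D" I
      using that by (simp add: product_prob_space_def product_sigma_finite_def product_prob_space_axioms_def
        prob_space_imp_sigma_finite space_prob_algebra)
    have "sets D = sets N"
      using that by (simp add: space_prob_algebra)
    then show ?thesis
      unfolding A(1) using A(2) \<open>finite I\<close> by (intro emeasure_PiM) auto
  qed
  ultimately show "(\<lambda>D. emeasure (PiM I (\<lambda>_. D)) A) \<in> borel_measurable (prob_algebra N)"
    using measurable_cong[of "prob_algebra N" "\<lambda>D. emeasure (PiM I (\<lambda>_. D)) A"] by simp
qed

lemma measurable_vimage_algebra_eq:
  fixes g :: "'a \<Rightarrow> real"
  assumes g: "g \<in> borel_measurable (vimage_algebra X f N)" and f: "f \<in> X \<rightarrow> space N"
    and w: "w \<in> X" "w' \<in> X" and eq: "f w = f w'"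
  shows "g w = g w'"
proof -
  have "g -` {g w} \<inter> space (vimage_algebra X f N) \<in> sets (vimage_algebra X f N)"
    by (rule measurable_sets[OF g]) auto
  then obtain A where A: "A \<in> sets N" "g -` {g w} \<inter> X = f -` A \<inter> X"
    unfolding sets_vimage_algebra2[OF f] by auto
  have "w \<in> f -` A \<inter> X"
    using A(2) w by blast
  then have "w' \<in> f -` A \<inter> X"
    using eq w by auto
  then have "w' \<in> g -` {g w} \<inter> X"
    using A(2) by blast
  then show ?thesis
    by simp
qed

lemma measurable_pair_measure_pmf_countable:
  fixes h :: "'a \<Rightarrow> 'b::countable \<Rightarrow> real"
  assumes "\<And>t. (\<lambda>x. h x t) \<in> borel_measurable A"
  shows "(\<lambda>w. h (fst w) (snd w)) \<in> borel_measurable (A \<Otimes>\<^sub>M measure_pmf p)"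
proof (rule measurable_compose_countable'[where f="\<lambda>t w. h (fst w) t" and g=snd and I=UNIV])
  show "(\<lambda>w. h (fst w) t) \<in> borel_measurable (A \<Otimes>\<^sub>M measure_pmf p)" for t
    using assms by measurable
  show "snd \<in> A \<Otimes>\<^sub>M measure_pmf p \<rightarrow>\<^sub>M count_space UNIV"
    using measurable_cong_sets[OF refl sets_measure_pmf_count_space] by measurable
qed simp

section \<open>Empirical distribution functions of i.i.d. samples\<close>

definition cdf_var :: "real measure \<Rightarrow> real" where
  "cdf_var D = (\<integral>s. cdf D s * (1 - cdf D s) \<partial>D)"

definition emp_cdf :: "'i set \<Rightarrow> ('i \<Rightarrow> real) \<Rightarrow> real \<Rightarrow> real" where
  "emp_cdf Y x s = (\<Sum>r\<in>Y. of_bool (x r \<le> s)) / card Y"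

lemma emp_cdf_bounds: "0 \<le> emp_cdf Y x s \<and> emp_cdf Y x s \<le> 1"
proof -
  have "(\<Sum>r\<in>Y. of_bool (x r \<le> s)) \<le> (\<Sum>r\<in>Y. 1 :: real)"
    by (intro sum_mono) simp
  then show ?thesis
    by (auto simp: emp_cdf_def divide_le_eq_1 sum_nonneg)
qed

lemma ecdf_image_mset_mset_set:
  assumes "finite Y"
  shows "ecdf (image_mset x (mset_set Y)) s = emp_cdf Y x s"
proof -
  have "size (filter_mset (\<lambda>u. u \<le> s) (image_mset x (mset_set Y))) = card {r \<in> Y. x r \<le> s}"
    using assms by (simp add: filter_mset_image_mset)
  moreover have "(\<Sum>r\<in>Y. of_bool (x r \<le> s)) = real (card {r \<in> Y. x r \<le> s})"
    using assms by (simp add: Int_def)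
  ultimately show ?thesis
    using assms by (simp add: ecdf_def emp_cdf_def)
qed

lemma (in real_distribution) borel_measurable_cdf[measurable]: "cdf M \<in> borel_measurable borel"
  by (rule borel_measurable_mono) (simp add: mono_def cdf_nondecreasing)

lemma (in real_distribution) cdf_var_le_quarter: "cdf_var M \<le> 1/4"
proof -
  have "cdf_var M \<le> (\<integral>s. 1/4 \<partial>M)"
    unfolding cdf_var_def
  proof (rule integral_mono)
    show "integrable M (\<lambda>s. cdf M s * (1 - cdf M s))"
      using cdf_nonneg cdf_bounded_prob
      by (intro integrable_const_bound[where B=1] AE_I2) (auto simp: abs_mult intro!: mult_le_one)
    show "cdf M s * (1 - cdf M s) \<le> 1/4" for s
      using zero_le_power2[of "cdf M s - 1/2"] by (simp add: power2_eq_square algebra_simps)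
  qed simp
  then show ?thesis
    using prob_space by simp
qed

locale iid_sample = real_distribution D for D +
  fixes I :: "'i set"
  assumes finite_index: "finite I"
begin

abbreviation P where "P \<equiv> PiM I (\<lambda>_. D)"

sublocale Prod: product_prob_space "\<lambda>_. D" I
  by unfold_locales

lemma sets_P: "sets P = sets (PiM I (\<lambda>_. borel))"
  by (rule sets_PiM_cong) auto

lemma space_P: "space P = space (PiM I (\<lambda>_. borel))"
  by (simp add: space_PiM)

lemma pred_coord_eq[measurable]: "r \<in> I \<Longrightarrow> t \<in> I \<Longrightarrow> Measurable.pred P (\<lambda>x. x r = x t)"
  unfolding pred_def sets_P space_P by measurable

lemma pred_coord_le[measurable]: "r \<in> I \<Longrightarrow> t \<in> I \<Longrightarrow> Measurable.pred P (\<lambda>x. x r \<le> x t)"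
  unfolding pred_def sets_P space_P by measurable

lemma measurable_cdf_coord[measurable]: "t \<in> I \<Longrightarrow> (\<lambda>x. cdf D (x t)) \<in> borel_measurable P"
  by measurable

lemma cdf_bounds: "0 \<le> cdf D s" "cdf D s \<le> 1"
  by (simp_all add: cdf_nonneg cdf_bounded_prob)

lemma abs_of_bool_minus_cdf_le: "\<bar>of_bool b - cdf D s\<bar> \<le> 1"
  using cdf_bounds[of s] by auto

lemma integrable_of_bool_le[simp]: "integrable D (\<lambda>y. of_bool (y \<le> s) :: real)"
  by (intro integrable_const_bound[where B=1]) auto

lemma integral_of_bool_le: "(\<integral>y. of_bool (y \<le> s) \<partial>D) = cdf D s"
proof -
  have "(\<integral>y. of_bool (y \<le> s) \<partial>D) = (\<integral>y. indicator {..s} y \<partial>D)"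
    by (intro Bochner_Integration.integral_cong) (auto simp: indicator_def)
  also have "\<dots> = cdf D s"
    using emeasure_finite by (simp add: cdf_def)
  finally show ?thesis .
qed

lemma integrable_bounded:
  fixes f :: "_ \<Rightarrow> real"
  assumes "f \<in> borel_measurable P" "\<And>x. x \<in> space P \<Longrightarrow> \<bar>f x\<bar> \<le> B"
  shows "integrable P f"
  using assms by (intro Prod.P.integrable_const_bound[where B=B]) auto

lemma integral_mult_centered_le:
  fixes h :: "_ \<Rightarrow> real"
  assumes "r \<in> I" "t \<in> I" "r \<noteq> t"
    and h[measurable]: "h \<in> borel_measurable P" and h_bound: "\<And>x. x \<in> space P \<Longrightarrow> \<bar>h x\<bar> \<le> B"
    and h_indep: "\<And>x y. x \<in> space P \<Longrightarrow> h (x(r := y)) = h x"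
  shows "(\<integral>x. h x * (of_bool (x r \<le> x t) - cdf D (x t)) \<partial>P) = 0"
proof -
  have "(\<integral>x. h x * (of_bool (x r \<le> x t) - cdf D (x t)) \<partial>P) = (\<integral>x. 0 \<partial>P)"
  proof (rule Prod.integral_PiM_resample[OF finite_index \<open>r \<in> I\<close>])
    show "integrable P (\<lambda>x. h x * (of_bool (x r \<le> x t) - cdf D (x t)))"
    proof (rule integrable_bounded[where B=B])
      fix x assume "x \<in> space P"
      then show "\<bar>h x * (of_bool (x r \<le> x t) - cdf D (x t))\<bar> \<le> B"
        using h_bound[of x] cdf_bounds[of "x t"]
        by (auto simp: abs_mult intro!: mult_left_le[THEN order_trans])
    qed (use assms in measurable)
    fix x assume "x \<in> space P"
    then show "(\<integral>y. h (x(r := y)) * (of_bool ((x(r := y)) r \<le> (x(r := y)) t) - cdf D ((x(r := y)) t)) \<partial>D) = 0"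
      using \<open>r \<noteq> t\<close> h_indep by (simp add: integral_of_bool_le prob_space[unfolded space_eq_univ])
  qed simp
  then show ?thesis
    by simp
qed

lemma integrable_of_bool_le_coord:
  "r \<in> I \<Longrightarrow> t \<in> I \<Longrightarrow> integrable P (\<lambda>x. of_bool (x r \<le> x t) :: real)"
  by (rule integrable_bounded[where B=1]) auto

lemma integrable_of_bool_le_coord_pair:
  "r \<in> I \<Longrightarrow> r' \<in> I \<Longrightarrow> t \<in> I \<Longrightarrow>
    integrable P (\<lambda>x. of_bool (x r' \<le> x t) * of_bool (x r \<le> x t) :: real)"
  by (rule integrable_bounded[where B=1]) auto

lemma integral_mult_le_coord:
  fixes h :: "_ \<Rightarrow> real"
  assumes "r \<in> I" "t \<in> I" "r \<noteq> t"
    and h[measurable]: "h \<in> borel_measurable P" and h_bound: "\<And>x. x \<in> space P \<Longrightarrow> \<bar>h x\<bar> \<le> B"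
    and h_indep: "\<And>x y. x \<in> space P \<Longrightarrow> h (x(r := y)) = h x"
  shows "(\<integral>x. h x * of_bool (x r \<le> x t) \<partial>P) = (\<integral>x. h x * cdf D (x t) \<partial>P)"
proof -
  have bounded: "\<bar>h x * c\<bar> \<le> B" if "x \<in> space P" "0 \<le> c" "c \<le> 1" for x and c :: real
    using h_bound[OF that(1)] that(2,3) by (auto simp: abs_mult intro!: mult_left_le[THEN order_trans])
  have "integrable P (\<lambda>x. h x * of_bool (x r \<le> x t))" "integrable P (\<lambda>x. h x * cdf D (x t))"
    using assms bounded cdf_bounds by (auto intro!: integrable_bounded[where B=B])
  then show ?thesis
    using integral_mult_centered_le[of r t h B, OF assms]
    by (simp add: right_diff_distrib)
qed

lemma integral_of_bool_le_coord:
  assumes "r \<in> I" "t \<in> I" "r \<noteq> t"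
  shows "(\<integral>x. of_bool (x r \<le> x t) \<partial>P) = (\<integral>s. cdf D s \<partial>D)"
  using integral_mult_le_coord[OF assms, of "\<lambda>_. 1" 1] Prod.integral_PiM_component[of t "cdf D"] assms
  by simp

lemma integral_of_bool_le_coord_pair:
  assumes "r \<in> I" "r' \<in> I" "t \<in> I" "r \<noteq> t" "r' \<noteq> t" "r \<noteq> r'"
  shows "(\<integral>x. of_bool (x r' \<le> x t) * of_bool (x r \<le> x t) \<partial>P) = (\<integral>s. (cdf D s)\<^sup>2 \<partial>D)"
proof -
  have "(\<integral>x. of_bool (x r' \<le> x t) * of_bool (x r \<le> x t) \<partial>P)
      = (\<integral>x. of_bool (x r' \<le> x t) * cdf D (x t) \<partial>P)"
    using assms by (intro integral_mult_le_coord[where B=1]) auto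
  also have "\<dots> = (\<integral>x. cdf D (x t) * of_bool (x r' \<le> x t) \<partial>P)"
    by (simp add: mult.commute)
  also have "\<dots> = (\<integral>x. cdf D (x t) * cdf D (x t) \<partial>P)"
    using assms cdf_bounds by (intro integral_mult_le_coord[where B=1]) auto
  also have "\<dots> = (\<integral>s. (cdf D s)\<^sup>2 \<partial>D)"
    using Prod.integral_PiM_component[of t "\<lambda>s. (cdf D s)\<^sup>2"] assms by (simp add: power2_eq_square)
  finally show ?thesis .
qed

lemma integral_sq_centered_of_bool_le: "(\<integral>y. (of_bool (y \<le> s) - cdf D s)\<^sup>2 \<partial>D) = cdf D s * (1 - cdf D s)"
proof -
  have "(of_bool (y \<le> s) - cdf D s)\<^sup>2 = (1 - 2 * cdf D s) * of_bool (y \<le> s) + (cdf D s)\<^sup>2" for y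
    by (simp add: power2_eq_square algebra_simps)
  then have "(\<integral>y. (of_bool (y \<le> s) - cdf D s)\<^sup>2 \<partial>D) = (1 - 2 * cdf D s) * cdf D s + (cdf D s)\<^sup>2"
    by (simp add: integral_of_bool_le prob_space[unfolded space_eq_univ])
  then show ?thesis
    by (simp add: power2_eq_square algebra_simps)
qed

lemma integral_sq_centered_le_coord:
  assumes "r \<in> I" "t \<in> I" "r \<noteq> t"
  shows "(\<integral>x. (of_bool (x r \<le> x t) - cdf D (x t))\<^sup>2 \<partial>P) = cdf_var D"
proof -
  have "(\<integral>x. (of_bool (x r \<le> x t) - cdf D (x t))\<^sup>2 \<partial>P) = (\<integral>x. cdf D (x t) * (1 - cdf D (x t)) \<partial>P)"
  proof (rule Prod.integral_PiM_resample[OF finite_index \<open>r \<in> I\<close>])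
    show "integrable P (\<lambda>x. (of_bool (x r \<le> x t) - cdf D (x t))\<^sup>2)"
      using assms cdf_bounds by (intro integrable_bounded[where B=1]) (auto intro!: power_le_one)
    show "integrable P (\<lambda>x. cdf D (x t) * (1 - cdf D (x t)))"
      using assms cdf_bounds by (intro integrable_bounded[where B=1]) (auto simp: abs_mult intro!: mult_le_one)
  qed (use \<open>r \<noteq> t\<close> integral_sq_centered_of_bool_le in simp)
  also have "\<dots> = cdf_var D"
    unfolding cdf_var_def using assms by (intro Prod.integral_PiM_component) auto
  finally show ?thesis .
qed

lemma integral_centered_le_orthogonal:
  assumes "r \<in> I" "r' \<in> I" "t \<in> I" "r \<noteq> t" "r' \<noteq> t" "r \<noteq> r'"
  shows "(\<integral>x. (of_bool (x r \<le> x t) - cdf D (x t)) * (of_bool (x r' \<le> x t) - cdf D (x t)) \<partial>P) = 0"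
proof -
  have "(\<integral>x. (of_bool (x r' \<le> x t) - cdf D (x t)) * (of_bool (x r \<le> x t) - cdf D (x t)) \<partial>P) = 0"
    using assms abs_of_bool_minus_cdf_le by (intro integral_mult_centered_le[where B=1]) auto
  then show ?thesis
    by (simp add: mult.commute)
qed

lemma integral_sq_diff_emp_cdf:
  fixes h :: "_ \<Rightarrow> real"
  assumes Y: "Y \<subseteq> I" "Y \<noteq> {}" and t: "t \<in> I" "t \<notin> Y"
    and h[measurable]: "h \<in> borel_measurable P" and h_bound: "\<And>x. x \<in> space P \<Longrightarrow> \<bar>h x\<bar> \<le> B"
    and h_indep: "\<And>r x y. r \<in> Y \<Longrightarrow> x \<in> space P \<Longrightarrow> h (x(r := y)) = h x"
  shows "(\<integral>x. (h x - emp_cdf Y x (x t))\<^sup>2 \<partial>P) = (\<integral>x. (h x - cdf D (x t))\<^sup>2 \<partial>P) + cdf_var D / card Y"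
proof -
  have "finite Y"
    using Y finite_index finite_subset by blast
  then have card_pos: "card Y > 0"
    using Y by (simp add: card_gt_0_iff)
  have r_I: "r \<in> I" "r \<noteq> t" if "r \<in> Y" for r
    using that Y t by auto
  define e where "e r x = of_bool (x r \<le> x t) - cdf D (x t)" for r x
  have e_bound: "\<bar>e r x\<bar> \<le> B + 1" if "x \<in> space P" for r x
    using h_bound[OF that] cdf_bounds[of "x t"] by (auto simp: e_def)
  have u_bound: "\<bar>h x - cdf D (x t)\<bar> \<le> B + 1" if "x \<in> space P" for x
    using h_bound[OF that] cdf_bounds[of "x t"] by auto
  have emp: "h x - emp_cdf Y x (x t) = (h x - cdf D (x t)) - (\<Sum>r\<in>Y. e r x) / card Y" for x
    using card_pos by (simp add: emp_cdf_def e_def sum_subtractf field_simps)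
  have "(\<integral>x. (h x - emp_cdf Y x (x t))\<^sup>2 \<partial>P)
      = (\<integral>x. (h x - cdf D (x t))\<^sup>2 \<partial>P) + (\<Sum>r\<in>Y. \<integral>x. (e r x)\<^sup>2 \<partial>P) / (real (card Y))\<^sup>2"
    unfolding emp
  proof (rule Prod.P.integral_sq_diff_sum_orthogonal[OF \<open>finite Y\<close> _ u_bound _ e_bound])
    show "(\<lambda>x. h x - cdf D (x t)) \<in> borel_measurable P"
      using t by measurable
    show "e r \<in> borel_measurable P" if "r \<in> Y" for r
      unfolding e_def using t r_I[OF that] by measurable
    show "(\<integral>x. (h x - cdf D (x t)) * e r x \<partial>P) = 0" if "r \<in> Y" for r
      unfolding e_def using r_I[OF that] t u_bound h_indep[OF that]
      by (intro integral_mult_centered_le[where B="B + 1"]) auto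
    show "(\<integral>x. e r x * e r' x \<partial>P) = 0" if "r \<in> Y" "r' \<in> Y" "r \<noteq> r'" for r r'
      unfolding e_def using r_I[OF that(1)] r_I[OF that(2)] that(3) t
      by (intro integral_centered_le_orthogonal) auto
  qed
  also have "(\<Sum>r\<in>Y. \<integral>x. (e r x)\<^sup>2 \<partial>P) = card Y * cdf_var D"
    unfolding e_def using r_I t by (simp add: integral_sq_centered_le_coord)
  finally show ?thesis
    using card_pos by (simp add: power2_eq_square)
qed

lemma AE_coord_neq:
  assumes atomless: "\<And>s. measure D {s} = 0" and "r \<in> I" "t \<in> I" "r \<noteq> t"
  shows "AE x in P. x r \<noteq> x t"
proof -
  have "(\<integral>x. of_bool (x r = x t) \<partial>P) = (\<integral>x. (0 :: real) \<partial>P)"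
  proof (rule Prod.integral_PiM_resample[OF finite_index \<open>r \<in> I\<close>])
    show "integrable P (\<lambda>x. of_bool (x r = x t) :: real)"
      using assms by (intro integrable_bounded[where B=1]) auto
    fix x
    have "(\<integral>y. of_bool (y = x t) \<partial>D) = (\<integral>y. (indicator {x t} y :: real) \<partial>D)"
      by (intro Bochner_Integration.integral_cong) (auto simp: indicator_def)
    also have "\<dots> = 0"
      by (simp add: atomless)
    finally show "(\<integral>y. of_bool ((x(r := y)) r = (x(r := y)) t) \<partial>D) = (0 :: real)"
      using \<open>r \<noteq> t\<close> by simp
  qed simp
  then have "AE x in P. (of_bool (x r = x t) :: real) = 0"
    using assms by (subst integral_nonneg_eq_0_iff_AE[symmetric])
      (auto intro!: integrable_bounded[where B=1])
  then show ?thesis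
    by simp
qed

lemma integral_cdf_atomless:
  assumes atomless: "\<And>s. measure D {s} = 0" and "r \<in> I" "t \<in> I" "r \<noteq> t"
  shows "(\<integral>s. cdf D s \<partial>D) = 1/2"
proof -
  have "AE x in P. x r \<noteq> x t"
    using AE_coord_neq[OF assms] .
  then have "(\<integral>x. of_bool (x r \<le> x t) + of_bool (x t \<le> x r) \<partial>P) = (\<integral>x. (1 :: real) \<partial>P)"
    using assms by (intro integral_cong_AE) auto
  then show ?thesis
    using integral_of_bool_le_coord[of r t] integral_of_bool_le_coord[of t r] Prod.P.prob_space
    by (simp add: assms assms(4)[symmetric] integrable_of_bool_le_coord)
qed

lemma integral_cdf_sq_atomless:
  assumes atomless: "\<And>s. measure D {s} = 0"
    and "p \<in> I" "q \<in> I" "t \<in> I" "p \<noteq> q" "p \<noteq> t" "q \<noteq> t"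
  shows "(\<integral>s. (cdf D s)\<^sup>2 \<partial>D) = 1/3"
proof -
  have "AE x in P. x p \<noteq> x q" "AE x in P. x p \<noteq> x t" "AE x in P. x q \<noteq> x t"
    using assms by (auto intro!: AE_coord_neq)
  then have "AE x in P. of_bool (x q \<le> x p) * of_bool (x t \<le> x p) + of_bool (x p \<le> x q) * of_bool (x t \<le> x q)
      + of_bool (x p \<le> x t) * of_bool (x q \<le> x t) = (1 :: real)"
    by eventually_elim auto
  then have "(\<integral>x. of_bool (x q \<le> x p) * of_bool (x t \<le> x p) + of_bool (x p \<le> x q) * of_bool (x t \<le> x q)
      + of_bool (x p \<le> x t) * of_bool (x q \<le> x t) \<partial>P) = (\<integral>x. (1 :: real) \<partial>P)"
    by (rule integral_cong_AE[rotated 2]) (use assms in measurable)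
  then show ?thesis
    using integral_of_bool_le_coord_pair[of t q p] integral_of_bool_le_coord_pair[of t p q]
      integral_of_bool_le_coord_pair[of q p t] Prod.P.prob_space
    by (simp add: assms assms(5-7)[symmetric] integrable_of_bool_le_coord_pair)
qed

end

lemma (in real_distribution) cdf_var_atomless:
  assumes atomless: "\<And>s. measure M {s} = 0"
  shows "cdf_var M = 1/6"
proof -
  interpret S: iid_sample M "{0, 1, 2 :: nat}"
    by unfold_locales auto
  have "(\<integral>s. cdf M s \<partial>M) = 1/2"
    using S.integral_cdf_atomless[OF atomless, of 0 1] by simp
  moreover have "(\<integral>s. (cdf M s)\<^sup>2 \<partial>M) = 1/3"
    using S.integral_cdf_sq_atomless[OF atomless, of 0 1 2] by simp
  moreover have "cdf_var M = (\<integral>s. cdf M s \<partial>M) - (\<integral>s. (cdf M s)\<^sup>2 \<partial>M)"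
    unfolding cdf_var_def using cdf_nonneg cdf_bounded_prob
    by (subst Bochner_Integration.integral_diff[symmetric])
      (auto intro!: integrable_const_bound[where B=1] Bochner_Integration.integral_cong
        simp: power2_eq_square algebra_simps abs_le_iff mult_le_one)
  ultimately show ?thesis
    by simp
qed

section \<open>The mechanism under truthful reporting\<close>

locale truthful_mechanism =
  fixes prior :: "real measure measure" and m :: nat and n :: "nat \<Rightarrow> nat" and i :: nat
  assumes prob_space_prior: "prob_space prior"
    and sets_prior: "sets prior = sets (prob_algebra borel)"
    and agent: "i < m" and own_nonempty: "n i \<ge> 1"
    and others_size: "(\<Sum>j\<in>{..<m} - {i}. n j) - 1 \<ge> 1"
begin

abbreviation "I \<equiv> data_idx m n"
abbreviation "Own \<equiv> own_idx n i"
abbreviation "R \<equiv> others_idx m n i"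
abbreviation "M \<equiv> model prior m n i"
abbreviation "G \<equiv> info_alg prior m n i"
abbreviation "S \<equiv> stat m n i"
abbreviation "sample D \<equiv> PiM I (\<lambda>_. D :: real measure)"
abbreviation "data_space \<equiv> PiM I (\<lambda>_. borel :: real measure)"

lemma finite_I: "finite I"
  by (rule finite_subset[of _ "{..<m} \<times> (\<Union>j<m. {..<n j})"]) (auto simp: data_idx_def)

lemma own_subset: "Own \<subseteq> I" and others_subset: "R \<subseteq> I" and own_others_disjoint: "Own \<inter> R = {}"
  using agent by (auto simp: own_idx_def others_idx_def data_idx_def)

lemma finite_R: "finite R"
  using finite_I others_subset finite_subset by blast

lemma card_R: "card R = (\<Sum>j\<in>{..<m} - {i}. n j)"
proof -
  have "R = Sigma ({..<m} - {i}) (\<lambda>j. {..<n j})"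
    by (auto simp: others_idx_def)
  then show ?thesis
    by (simp add: card_SigmaI)
qed

lemma card_Own: "card Own = n i"
proof -
  have "Own = {i} \<times> {..<n i}"
    by (auto simp: own_idx_def)
  then show ?thesis
    by (simp add: card_cartesian_product)
qed

lemma card_R_ge_2: "card R \<ge> 2"
  using card_R others_size by linarith

lemma card_R_minus: "t \<in> R \<Longrightarrow> card (R - {t}) = card R - 1"
  using finite_R by simp

lemma R_minus_nonempty:
  assumes "t \<in> R"
  shows "R - {t} \<noteq> {}"
proof
  assume "R - {t} = {}"
  then have "card (R - {t}) = 0"
    by (simp only: card.empty)
  then show False
    using card_R_minus[OF assms] card_R_ge_2 by simp
qed

lemma R_nonempty: "R \<noteq> {}"
  using card_R_ge_2 by auto

lemma real_distribution_prior: "D \<in> space prior \<Longrightarrow> real_distribution D"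
  using sets_eq_imp_space_eq[OF sets_prior]
  by (auto simp: space_prob_algebra real_distribution_def real_distribution_axioms_def)

lemma iid_sample_prior: "D \<in> space prior \<Longrightarrow> iid_sample D I"
  using real_distribution_prior finite_I by (simp add: iid_sample_def iid_sample_axioms_def)

lemma prob_space_sample: "D \<in> space prior \<Longrightarrow> prob_space (sample D)"
  using real_distribution_prior by (simp add: prob_space_PiM real_distribution_def)

lemma measurable_sample: "sample \<in> prior \<rightarrow>\<^sub>M prob_algebra data_space"
  using measurable_PiM_prob_algebra[OF finite_I] measurable_cong_sets[OF sets_prior refl] by blast

lemma sets_sample: "D \<in> space prior \<Longrightarrow> sets (sample D) = sets data_space"
  using real_distribution_prior by (intro sets_PiM_cong) (auto simp: real_distribution.events_eq_borel)

abbreviation "data \<equiv> prior \<bind> sample"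
abbreviation "pick \<equiv> measure_pmf (pmf_of_set R)"

lemma prior_in_space: "prior \<in> space (prob_algebra (prob_algebra borel))"
  using prob_space_prior sets_prior by (simp add: space_prob_algebra)

lemma prob_space_data: "prob_space data"
  by (rule prob_space_bind'[OF prior_in_space measurable_PiM_prob_algebra[OF finite_I]])

lemma sets_data: "sets data = sets data_space"
  by (rule sets_bind'[OF prior_in_space measurable_PiM_prob_algebra[OF finite_I]])

lemma model_eq: "M = data \<Otimes>\<^sub>M pick"
  by (simp add: model_def)

lemma prob_space_model: "prob_space M"
  unfolding model_eq by (intro prob_space_pair prob_space_data prob_space_measure_pmf)

lemma sets_model: "sets M = sets (data_space \<Otimes>\<^sub>M pick)"
  unfolding model_eq by (intro sets_pair_measure_cong sets_data) auto

lemma space_model: "space M = space data_space \<times> UNIV"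
  using sets_eq_imp_space_eq[OF sets_model] by (simp add: space_pair_measure)

lemma measurable_section:
  assumes "f \<in> borel_measurable M"
  shows "(\<lambda>x. f (x, t)) \<in> borel_measurable data_space"
proof -
  have "(\<lambda>x. f (x, t)) \<in> borel_measurable data"
    using assms unfolding model_eq by measurable
  then show ?thesis
    using measurable_cong_sets[OF sets_data refl] by blast
qed

lemma space_sample: "D \<in> space prior \<Longrightarrow> space (sample D) = space data_space"
  using sets_sample by (rule sets_eq_imp_space_eq)

lemma abs_avg_section_le:
  fixes f :: "_ \<Rightarrow> real"
  assumes "\<And>w. w \<in> space M \<Longrightarrow> \<bar>f w\<bar> \<le> C" and "x \<in> space data_space"
  shows "\<bar>(\<Sum>t\<in>R. f (x, t)) / card R\<bar> \<le> C"
proof -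
  have "\<bar>\<Sum>t\<in>R. f (x, t)\<bar> \<le> (\<Sum>t\<in>R. C)"
    using assms by (intro sum_abs[THEN order_trans] sum_mono) (auto simp: space_model)
  then show ?thesis
    using card_R_ge_2 by (simp add: abs_divide divide_le_eq mult.commute)
qed

lemma integrable_integral_sample:
  fixes g :: "_ \<Rightarrow> real"
  assumes g: "g \<in> borel_measurable data_space" and g_bound: "\<And>x. x \<in> space data_space \<Longrightarrow> \<bar>g x\<bar> \<le> C"
  shows "integrable prior (\<lambda>D. \<integral>x. g x \<partial>sample D)"
proof (rule finite_measure.integrable_const_bound[where B=C])
  show "finite_measure prior"
    using prob_space_prior by (rule prob_space.finite_measure)
  show "(\<lambda>D. \<integral>x. g x \<partial>sample D) \<in> borel_measurable prior"
    using measurable_compose[OF measurable_prob_algebraD[OF measurable_sample]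
      integral_measurable_subprob_algebra[OF g]] by (simp add: comp_def)
  show "AE D in prior. norm (\<integral>x. g x \<partial>sample D) \<le> C"
  proof (rule AE_I2)
    fix D assume D: "D \<in> space prior"
    interpret prob_space "sample D"
      by (rule prob_space_sample[OF D])
    have "integrable (sample D) g"
      using g g_bound by (intro integrable_const_bound[where B=C] AE_I2)
        (auto simp: measurable_cong_sets[OF sets_sample[OF D] refl] space_sample[OF D])
    moreover have "-C \<le> g x" "g x \<le> C" if "x \<in> space (sample D)" for x
      using g_bound[of x] that by (auto simp: space_sample[OF D] abs_le_iff)
    ultimately have "-C \<le> (\<integral>x. g x \<partial>sample D)" "(\<integral>x. g x \<partial>sample D) \<le> C"
      by (auto intro!: integral_le_const integral_ge_const AE_I2)
    then show "norm (\<integral>x. g x \<partial>sample D) \<le> C"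
      by simp
  qed
qed

lemma integral_model:
  fixes f :: "_ \<Rightarrow> real"
  assumes f: "f \<in> borel_measurable M" and f_bound: "\<And>w. w \<in> space M \<Longrightarrow> \<bar>f w\<bar> \<le> C"
  shows "integral\<^sup>L M f = (\<integral>D. (\<integral>x. (\<Sum>t\<in>R. f (x, t)) / card R \<partial>sample D) \<partial>prior)"
proof -
  interpret data: prob_space data
    by (rule prob_space_data)
  interpret pair_prob_space data pick
    by unfold_locales
  have "integrable M f"
    using f f_bound prob_space_model
    by (intro finite_measure.integrable_const_bound[where B=C] prob_space.finite_measure AE_I2) auto
  then have "integral\<^sup>L M f = (\<integral>x. (\<integral>t. f (x, t) \<partial>pick) \<partial>data)"
    unfolding model_eq by (rule integral_fst'[symmetric])
  also have "\<dots> = (\<integral>x. (\<Sum>t\<in>R. f (x, t)) / card R \<partial>data)"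
    using integral_pmf_of_set[OF R_nonempty finite_R] by simp
  also have "\<dots> = (\<integral>D. (\<integral>x. (\<Sum>t\<in>R. f (x, t)) / card R \<partial>sample D) \<partial>prior)"
    using measurable_section[OF f] abs_avg_section_le[OF f_bound]
    by (intro integral_bind[OF _ _ measurable_prob_algebraD[OF measurable_sample], where B'=1])
      (use prob_space_prior prob_space_sample in \<open>auto intro!: AE_I2 prob_space.finite_measure
        simp: prob_space.emeasure_space_1\<close>)
  finally show ?thesis .
qed

lemma integral_model_le:
  fixes f :: "_ \<Rightarrow> real"
  assumes f: "f \<in> borel_measurable M" and f_bound: "\<And>w. w \<in> space M \<Longrightarrow> \<bar>f w\<bar> \<le> C"
    and le: "AE D in prior. \<forall>t\<in>R. (\<integral>x. f (x, t) \<partial>sample D) \<le> a"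
  shows "integral\<^sup>L M f \<le> a"
proof -
  define g where "g x = (\<Sum>t\<in>R. f (x, t)) / card R" for x
  have g: "g \<in> borel_measurable data_space"
    unfolding g_def using measurable_section[OF f] by measurable
  have section_int: "integrable (sample D) (\<lambda>x. f (x, t))" if "D \<in> space prior" for D t
    using measurable_section[OF f] f_bound prob_space_sample[OF that]
    by (intro finite_measure.integrable_const_bound[where B=C] prob_space.finite_measure AE_I2)
      (auto simp: measurable_cong_sets[OF sets_sample[OF that] refl] space_sample[OF that] space_model)
  have "integral\<^sup>L M f = (\<integral>D. (\<integral>x. g x \<partial>sample D) \<partial>prior)"
    unfolding g_def by (rule integral_model[OF f f_bound])
  also have "\<dots> \<le> a"
  proof (rule prob_space.integral_le_const[OF prob_space_prior])
    show "integrable prior (\<lambda>D. \<integral>x. g x \<partial>sample D)"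
      using g abs_avg_section_le[OF f_bound] unfolding g_def by (rule integrable_integral_sample)
    show "AE D in prior. (\<integral>x. g x \<partial>sample D) \<le> a"
      using le
    proof (rule AE_mp, intro AE_I2 impI)
      fix D assume D: "D \<in> space prior" and le_D: "\<forall>t\<in>R. (\<integral>x. f (x, t) \<partial>sample D) \<le> a"
      have "(\<integral>x. g x \<partial>sample D) = (\<Sum>t\<in>R. \<integral>x. f (x, t) \<partial>sample D) / card R"
        unfolding g_def using section_int[OF D] by simp
      also have "\<dots> \<le> (\<Sum>t\<in>R. a) / card R"
        using le_D by (intro divide_right_mono sum_mono) auto
      also have "\<dots> = a"
        using card_R_ge_2 by simp
      finally show "(\<integral>x. g x \<partial>sample D) \<le> a" .
    qed
  qed
  finally show ?thesis .
qed

lemma integral_model_ge: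
  fixes f :: "_ \<Rightarrow> real"
  assumes f: "f \<in> borel_measurable M" and f_bound: "\<And>w. w \<in> space M \<Longrightarrow> \<bar>f w\<bar> \<le> C"
    and ge: "AE D in prior. \<forall>t\<in>R. a \<le> (\<integral>x. f (x, t) \<partial>sample D)"
  shows "a \<le> integral\<^sup>L M f"
  using integral_model_le[of "\<lambda>w. - f w" C "- a"] assms by simp

lemma measurable_coord_data[measurable]: "(\<lambda>x. x t) \<in> borel_measurable data_space"
proof (cases "t \<in> I")
  case False
  then have "x t = undefined" if "x \<in> space data_space" for x
    using that by (cases t) (auto simp: space_PiM PiE_def extensional_def)
  then show ?thesis
    using measurable_cong[of data_space "\<lambda>x. x t" "\<lambda>_. undefined"] by simp
qed simp

lemma borel_measurable_data: "borel_measurable data = borel_measurable data_space"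
  using measurable_cong_sets[OF sets_data refl] .

lemma measurable_T_val: "T_val \<in> borel_measurable M"
  using measurable_pair_measure_pmf_countable[of "\<lambda>x t. x t" data "pmf_of_set R"]
  unfolding model_eq T_val_def by (simp add: borel_measurable_data)

lemma pred_coord_le_data[measurable]: "Measurable.pred data_space (\<lambda>x. x r \<le> x t)"
  unfolding pred_def by (rule borel_measurable_le[OF measurable_coord_data measurable_coord_data])

lemma stat_eq: "S (x, t) = emp_cdf (R - {t}) x (x t)"
  using finite_R by (simp add: stat_def Z_set_def T_val_def ecdf_image_mset_mset_set)

lemma measurable_stat: "S \<in> borel_measurable M"
proof -
  have "(\<lambda>x. emp_cdf (R - {t}) x (x t)) \<in> borel_measurable data" for t
    unfolding borel_measurable_data emp_cdf_def by measurable
  then have "(\<lambda>w. emp_cdf (R - {snd w}) (fst w) (fst w (snd w))) \<in> borel_measurable M"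
    unfolding model_eq by (rule measurable_pair_measure_pmf_countable)
  moreover have "S = (\<lambda>w. emp_cdf (R - {snd w}) (fst w) (fst w (snd w)))"
    by (intro ext) (metis stat_eq prod.collapse)
  ultimately show ?thesis
    by simp
qed

lemma stat_bounds: "0 \<le> S w \<and> S w \<le> 1"
  using emp_cdf_bounds by (cases w) (simp add: stat_eq)

definition obs :: "(nat \<times> nat \<Rightarrow> real) \<times> (nat \<times> nat) \<Rightarrow> (nat \<times> nat \<Rightarrow> real) \<times> real" where
  "obs w = (restrict (fst w) Own, T_val w)"

abbreviation "obs_space \<equiv> PiM Own (\<lambda>_. borel) \<Otimes>\<^sub>M (borel :: real measure)"

lemma info_alg_eq: "G = vimage_algebra (space M) obs obs_space"
  unfolding info_alg_def obs_def by simp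

lemma obs_in_space: "obs \<in> space M \<rightarrow> space obs_space"
  by (auto simp: obs_def space_pair_measure space_PiM)

lemma measurable_obs: "obs \<in> M \<rightarrow>\<^sub>M obs_space"
proof -
  have "fst \<in> M \<rightarrow>\<^sub>M data_space"
    using measurable_fst[of data pick] measurable_cong_sets[OF refl sets_data] unfolding model_eq by blast
  then show ?thesis
    unfolding obs_def using measurable_restrict_subset[OF own_subset] measurable_T_val by measurable
qed

lemma subalgebra_info_alg: "subalgebra M G"
  unfolding subalgebra_def info_alg_eq
proof
  show "sets (vimage_algebra (space M) obs obs_space) \<subseteq> sets M"
    unfolding sets_vimage_algebra2[OF obs_in_space] using measurable_obs by auto
qed simp

lemma info_measurable_eq:
  fixes g :: "_ \<Rightarrow> real"
  assumes g: "g \<in> borel_measurable G" and w: "w \<in> space M" "w' \<in> space M"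
    and "\<And>u. u \<in> Own \<Longrightarrow> fst w u = fst w' u" and "T_val w = T_val w'"
  shows "g w = g w'"
proof (rule measurable_vimage_algebra_eq[OF g[unfolded info_alg_eq] obs_in_space w])
  show "obs w = obs w'"
    using assms by (auto simp: obs_def restrict_def)
qed

definition own_ecdf :: "(nat \<times> nat \<Rightarrow> real) \<times> (nat \<times> nat) \<Rightarrow> real" where
  "own_ecdf w = emp_cdf Own (fst w) (T_val w)"

lemma own_ecdf_bounds: "0 \<le> own_ecdf w \<and> own_ecdf w \<le> 1"
  unfolding own_ecdf_def by (rule emp_cdf_bounds)

lemma measurable_own_ecdf: "own_ecdf \<in> borel_measurable G"
proof -
  have "(\<lambda>p. emp_cdf Own (fst p) (snd p)) \<in> borel_measurable obs_space"
    unfolding emp_cdf_def by measurable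
  then have "(\<lambda>w. emp_cdf Own (fst (obs w)) (snd (obs w))) \<in> borel_measurable (vimage_algebra (space M) obs obs_space)"
    by (rule measurable_compose[OF measurable_vimage_algebra1[OF obs_in_space], unfolded comp_def])
  moreover have "emp_cdf Own (fst (obs w)) (snd (obs w)) = own_ecdf w" for w
    by (simp add: obs_def own_ecdf_def emp_cdf_def)
  ultimately show ?thesis
    unfolding info_alg_eq by simp
qed

lemma integral_sq_diff_stat_ge:
  assumes D: "D \<in> space prior" and t: "t \<in> R"
    and c: "c \<in> borel_measurable G" and c_bounds: "\<And>w. 0 \<le> c w \<and> c w \<le> 1"
  shows "cdf_var D / (real (card R) - 1) \<le> (\<integral>x. (c (x, t) - S (x, t))\<^sup>2 \<partial>sample D)"
proof -
  interpret iid_sample D I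
    by (rule iid_sample_prior[OF D])
  have c_section: "(\<lambda>x. c (x, t)) \<in> borel_measurable P"
    using measurable_section[OF measurable_from_subalg[OF subalgebra_info_alg c]]
      measurable_cong_sets[OF sets_sample[OF D] refl] by blast
  have c_indep: "c (x(r := y), t) = c (x, t)" if "r \<in> R - {t}" "x \<in> space P" for r x y
  proof (rule info_measurable_eq[OF c])
    show "(x(r := y), t) \<in> space M" "(x, t) \<in> space M"
      using that others_subset by (auto simp: space_model space_PiM PiE_def extensional_def)
    show "fst (x(r := y), t) u = fst (x, t) u" if "u \<in> Own" for u
      using that \<open>r \<in> R - {t}\<close> own_others_disjoint by auto
  qed (use that in \<open>auto simp: T_val_def\<close>)
  have "(\<integral>x. (c (x, t) - S (x, t))\<^sup>2 \<partial>P)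
      = (\<integral>x. (c (x, t) - cdf D (x t))\<^sup>2 \<partial>P) + cdf_var D / card (R - {t})"
    unfolding stat_eq using others_subset t R_minus_nonempty[OF t] c_bounds c_indep
    by (intro integral_sq_diff_emp_cdf[OF _ _ _ _ c_section, where B=1]) auto
  moreover have "real (card (R - {t})) = real (card R) - 1"
    using card_R_minus[OF t] card_R_ge_2 by simp
  ultimately show ?thesis
    by simp
qed

lemma integral_sq_diff_own_ecdf_stat:
  assumes D: "D \<in> space prior" and t: "t \<in> R"
  shows "(\<integral>x. (own_ecdf (x, t) - S (x, t))\<^sup>2 \<partial>sample D)
    = cdf_var D * (1 / card Own + 1 / (real (card R) - 1))"
proof -
  interpret iid_sample D I
    by (rule iid_sample_prior[OF D])
  have t_I: "t \<in> I" "t \<notin> Own"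
    using t others_subset own_others_disjoint by auto
  have Own_nonempty: "Own \<noteq> {}"
    using card_Own own_nonempty by auto
  have own_ecdf_measurable: "(\<lambda>x. emp_cdf Own x (x t)) \<in> borel_measurable P"
    unfolding emp_cdf_def using own_subset t_I by measurable
  have own_ecdf_bound: "\<bar>emp_cdf Own x (x t)\<bar> \<le> 1" for x
    using emp_cdf_bounds by (metis abs_of_nonneg)
  have own_ecdf_indep: "emp_cdf Own (x(r := y)) (x t) = emp_cdf Own x (x t)" if "r \<in> R - {t}" for r x y
    using that own_others_disjoint unfolding emp_cdf_def by (intro arg_cong2[where f="(/)"] sum.cong) auto
  have "(\<integral>x. (own_ecdf (x, t) - S (x, t))\<^sup>2 \<partial>P)
      = (\<integral>x. (emp_cdf Own x (x t) - cdf D (x t))\<^sup>2 \<partial>P) + cdf_var D / card (R - {t})"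
    unfolding stat_eq own_ecdf_def T_val_def fst_conv snd_conv
    using others_subset t R_minus_nonempty[OF t] own_ecdf_bound own_ecdf_indep
    by (intro integral_sq_diff_emp_cdf[OF _ _ _ _ own_ecdf_measurable, where B=1]) auto
  also have "(\<integral>x. (emp_cdf Own x (x t) - cdf D (x t))\<^sup>2 \<partial>P)
      = (\<integral>x. (cdf D (x t) - emp_cdf Own x (x t))\<^sup>2 \<partial>P)"
    by (simp add: power2_commute)
  also have "\<dots> = (\<integral>x. (cdf D (x t) - cdf D (x t))\<^sup>2 \<partial>P) + cdf_var D / card Own"
    using own_subset Own_nonempty t_I cdf_bounds
    by (intro integral_sq_diff_emp_cdf[where B=1]) (auto simp: abs_le_iff)
  moreover have "real (card (R - {t})) = real (card R) - 1"
    using card_R_minus[OF t] card_R_ge_2 by simp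
  ultimately show ?thesis
    by (simp add: field_simps)
qed

lemma expected_loss_le:
  assumes "AE D in prior. cdf_var D \<le> a"
  shows "expected_loss prior m n i \<le> a * (1 / card Own + 1 / (real (card R) - 1))"
proof -
  interpret finite_measure_subalgebra M G
    using prob_space_model subalgebra_info_alg
    by (simp add: finite_measure_subalgebra_def finite_measure_subalgebra_axioms_def prob_space.finite_measure)
  have "expected_loss prior m n i = (\<integral>w. (real_cond_exp M G S w - S w)\<^sup>2 \<partial>M)"
    by (simp add: expected_loss_def loss_def[abs_def])
  also have "\<dots> \<le> (\<integral>w. (own_ecdf w - S w)\<^sup>2 \<partial>M)"
    using measurable_stat stat_bounds measurable_own_ecdf own_ecdf_bounds
    by (intro integral_sq_real_cond_exp_le[where B=1 and C=1]) (auto simp: abs_le_iff)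
  also have "\<dots> \<le> a * (1 / card Own + 1 / (real (card R) - 1))"
  proof (rule integral_model_le[where C=1])
    show "(\<lambda>w. (own_ecdf w - S w)\<^sup>2) \<in> borel_measurable M"
      using measurable_from_subalg[OF subalgebra_info_alg measurable_own_ecdf] measurable_stat by measurable
    show "\<bar>(own_ecdf w - S w)\<^sup>2\<bar> \<le> 1" for w
      using own_ecdf_bounds stat_bounds by (rule sq_diff_le_1)
    show "AE D in prior. \<forall>t\<in>R. (\<integral>x. (own_ecdf (x, t) - S (x, t))\<^sup>2 \<partial>sample D)
        \<le> a * (1 / card Own + 1 / (real (card R) - 1))"
      using assms
    proof (rule AE_mp, intro AE_I2 impI ballI)
      fix D t assume "D \<in> space prior" "cdf_var D \<le> a" "t \<in> R"
      moreover have "0 \<le> 1 / real (card Own) + 1 / (real (card R) - 1)"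
        using card_R_ge_2 by simp
      ultimately show "(\<integral>x. (own_ecdf (x, t) - S (x, t))\<^sup>2 \<partial>sample D)
          \<le> a * (1 / card Own + 1 / (real (card R) - 1))"
        by (simp add: integral_sq_diff_own_ecdf_stat mult_right_mono)
    qed
  qed
  finally show ?thesis .
qed

lemma expected_loss_ge:
  assumes "AE D in prior. a \<le> cdf_var D"
  shows "a / (real (card R) - 1) \<le> expected_loss prior m n i"
proof -
  interpret finite_measure_subalgebra M G
    using prob_space_model subalgebra_info_alg
    by (simp add: finite_measure_subalgebra_def finite_measure_subalgebra_axioms_def prob_space.finite_measure)
  obtain c where c: "c \<in> borel_measurable G" and c_bounds: "\<And>w. 0 \<le> c w \<and> c w \<le> 1"
    and c_ae: "AE w in M. real_cond_exp M G S w = c w"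
    using real_cond_exp_bounded_version[OF measurable_stat, of 0 1] stat_bounds by auto
  have cM: "c \<in> borel_measurable M"
    by (rule measurable_from_subalg[OF subalgebra_info_alg c])
  have "a / (real (card R) - 1) \<le> (\<integral>w. (c w - S w)\<^sup>2 \<partial>M)"
  proof (rule integral_model_ge[where C=1])
    show "(\<lambda>w. (c w - S w)\<^sup>2) \<in> borel_measurable M"
      using cM measurable_stat by measurable
    show "\<bar>(c w - S w)\<^sup>2\<bar> \<le> 1" for w
      using c_bounds stat_bounds by (rule sq_diff_le_1)
    show "AE D in prior. \<forall>t\<in>R. a / (real (card R) - 1) \<le> (\<integral>x. (c (x, t) - S (x, t))\<^sup>2 \<partial>sample D)"
      using assms
    proof (rule AE_mp, intro AE_I2 impI ballI)
      fix D t assume D: "D \<in> space prior" and "a \<le> cdf_var D" and t: "t \<in> R"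
      then have "a / (real (card R) - 1) \<le> cdf_var D / (real (card R) - 1)"
        using card_R_ge_2 by (simp add: divide_right_mono)
      also have "\<dots> \<le> (\<integral>x. (c (x, t) - S (x, t))\<^sup>2 \<partial>sample D)"
        by (rule integral_sq_diff_stat_ge[OF D t c c_bounds])
      finally show "a / (real (card R) - 1) \<le> (\<integral>x. (c (x, t) - S (x, t))\<^sup>2 \<partial>sample D)" .
    qed
  qed
  also have "(\<integral>w. (c w - S w)\<^sup>2 \<partial>M) = expected_loss prior m n i"
    unfolding expected_loss_def loss_def using c_ae cM measurable_stat
    by (intro integral_cong_AE) auto
  finally show ?thesis .
qed

lemma AE_cdf_var_le_quarter: "AE D in prior. cdf_var D \<le> 1/4"
  by (intro AE_I2 real_distribution.cdf_var_le_quarter real_distribution_prior)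

lemma AE_cdf_var_atomless:
  assumes "AE D in prior. \<forall>x. measure D {x} = 0"
  shows "AE D in prior. cdf_var D = 1/6"
  using assms
proof (rule AE_mp, intro AE_I2 impI)
  fix D assume "D \<in> space prior" "\<forall>x. measure D {x} = 0"
  then show "cdf_var D = 1/6"
    using real_distribution.cdf_var_atomless[OF real_distribution_prior] by blast
qed

end

theorem proposition1:
  fixes prior :: "real measure measure" and m :: nat and n :: "nat \<Rightarrow> nat" and i :: nat
  assumes "prob_space prior"
    and "sets prior = sets (prob_algebra borel)"
    and "m \<ge> 2" and "i < m"
    and "n i \<ge> 1"
    and "(\<Sum>j\<in>{..<m} - {i}. n j) - 1 \<ge> 1"
  shows "0 \<le> expected_loss prior m n i
      \<and> expected_loss prior m n i
          \<le> (1/4) * (1 / real (n i) + 1 / (real (\<Sum>j\<in>{..<m} - {i}. n j) - 1))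
      \<and> ((AE D in prior. \<forall>x. measure D {x} = 0) \<longrightarrow>
           1 / (6 * (real (\<Sum>j\<in>{..<m} - {i}. n j) - 1)) \<le> expected_loss prior m n i
           \<and> expected_loss prior m n i
               \<le> (1/6) * (1 / real (n i) + 1 / (real (\<Sum>j\<in>{..<m} - {i}. n j) - 1)))"
proof -
  interpret truthful_mechanism prior m n i
    using assms(1,2,4-6) by (rule truthful_mechanism.intro)
  let ?z = "real (\<Sum>j\<in>{..<m} - {i}. n j) - 1"
  have k: "1 / real (n i) + 1 / ?z = 1 / card Own + 1 / (real (card R) - 1)"
    by (simp add: card_Own card_R)
  have "0 \<le> expected_loss prior m n i"
    by (simp add: expected_loss_def loss_def[abs_def])
  moreover have "expected_loss prior m n i \<le> 1/4 * (1 / real (n i) + 1 / ?z)"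
    unfolding k by (rule expected_loss_le[OF AE_cdf_var_le_quarter])
  moreover have "1 / (6 * ?z) \<le> expected_loss prior m n i
      \<and> expected_loss prior m n i \<le> 1/6 * (1 / real (n i) + 1 / ?z)"
    if "AE D in prior. \<forall>x. measure D {x} = 0"
  proof -
    have "AE D in prior. 1/6 \<le> cdf_var D" "AE D in prior. cdf_var D \<le> 1/6"
      using AE_cdf_var_atomless[OF that] by (auto elim: AE_mp intro: AE_I2)
    from expected_loss_ge[OF this(1)] expected_loss_le[OF this(2)] show ?thesis
      unfolding k by (simp add: card_R)
  qed
  ultimately show ?thesis
    by blast
qed

end
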